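(* Let $g \ge 2$, $n \ge 2$, let $(t_1,\ldots,t_n)$ be a generic $n$-tuple of elements of $T$, let $l$ and $q$ be distinct elements of $\{1,\ldots,n\}$, and let $(i,j,k)$ be a permutation of $(1,2,3)$. An element $[\rho] \in S_g(t_1,\ldots,t_n)$ lies in the common vanishing locus of $s^l_{i,j}(c_q)$ and $s^l_{i,k}(c_q)$ if and only if it lies in the common vanishing locus of $s^l_{j,i}(c_q)$ and $s^l_{k,i}(c_q)$.
   Context: Let $\Sigma$ be a compact Riemann surface of genus $g$, $p_1,\ldots,p_n\in\Sigma$ distinct points, and fix the presentation $\pi_1(\Sigma\setminus\{p_1,\ldots,p_n\}) = \langle a_1,\ldots,a_g,b_1,\ldots,b_g,c_1,\ldots,c_n \mid \prod_{i=1}^g[a_i,b_i]=\prod_{j=1}^n c_j\rangle$. Let $G=SU(3)$, $T\subset G$ the diagonal maximal torus. An $n$-tuple $(t_1,\ldots,t_n)$ in $T$ is generic if each $t_j$ has centralizer $T$ in $G$ (distinct eigenvalues) and no product $\lambda_1\cdots\lambda_n$ with $\lambda_i$ an eigenvalue of $t_i$ equals $1$. Let $S_g(t_1,\ldots,t_n) := \{\rho\in\mathrm{Hom}(\pi_1(\Sigma\setminus\{p_1,\ldots,p_n\}),G) \mid \rho(c_i)\sim t_i\ \forall i\}/G$ (conjugation quotient; $\sim$ is conjugacy in $G$), and $V^l_g(t_1,\ldots,t_n) := \{\rho \mid \rho(c_l)=t_l,\ \rho(c_i)\sim t_i\ \forall i\}$, a $T$-bundle over $S_g(t_1,\ldots,t_n)$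 under conjugation; every class $[\rho]$ has a representative in $V^l_g(t_1,\ldots,t_n)$. For $1\le j\le 3$ let $\mathbb{C}_{(j)}$ be the representation of $T$ where $\mathrm{diag}(e^{i\theta_1},e^{i\theta_2},e^{i\theta_3})$ acts by $e^{i\theta_j}$, and $L^l_j := (V^l_g(t_1,\ldots,t_n)\times\mathbb{C}_{(j)})/T$. For $l\in\{1,\ldots,n\}$, $1\le j,k\le 3$ and $i'\in\{1,\ldots,n\}\setminus\{l\}$, the paper defines a section $s^l_{j,k}(c_{i'})$ of $L^l_j$ as follows: for a representative $\rho\in V^l_g(t_1,\ldots,t_n)$ choose $A\in SU(3)$ with $A\rho(c_{i'})A^{-1}=t_{i'}$ (unique up to left multiplication by $T$), and the section takes the value determined by the matrix entry $A_{jk}$. Its zero locus is the set of $[\rho]$ such that, for a representative $\rho\in V^l_g(t_1,\ldots,t_n)$ and such $A$, $A_{jk}=0$; equivalently, the $k$-th coordinate of an eigenvector of $\rho(c_{i'})$ with eigenvalue $(t_{i'})_{jj}$ is zero. *)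

theory Defs
  imports "HOL-Analysis.Analysis"
begin

type_synonym mat3 = "complex^3^3"

definition cadj :: "mat3 \<Rightarrow> mat3" where
  "cadj A = (\<chi> i j. cnj (A $ j $ i))"

definition SU3 :: "mat3 set" where
  "SU3 = {A. A ** cadj A = mat 1 \<and> det A = 1}"

definition torus :: "mat3 set" where
  "torus = {t \<in> SU3. \<forall>i j. i \<noteq> j \<longrightarrow> t $ i $ j = 0}"

definition generic :: "nat \<Rightarrow> (nat \<Rightarrow> mat3) \<Rightarrow> bool" where
  "generic n t \<longleftrightarrow>
     (\<forall>m\<in>{1..n}. t m \<in> torus \<and> (\<forall>i j. i \<noteq> j \<longrightarrow> t m $ i $ i \<noteq> t m $ j $ j)) \<and>
     (\<forall>f :: nat \<Rightarrow> 3. (\<Prod>m\<in>{1..n}. t m $ f m $ f m) \<noteq> 1)"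

fun mprod :: "nat \<Rightarrow> (nat \<Rightarrow> mat3) \<Rightarrow> mat3" where
  "mprod 0 f = mat 1"
| "mprod (Suc m) f = mprod m f ** f (Suc m)"

definition commu :: "mat3 \<Rightarrow> mat3 \<Rightarrow> mat3" where
  "commu a b = a ** b ** matrix_inv a ** matrix_inv b"

text \<open>A representation rho is given by its values (a, b, c) on the generators
  a_1..a_g, b_1..b_g, c_1..c_n; values outside the index ranges are fixed to the identity
  so that such triples correspond bijectively to homomorphisms.\<close>
type_synonym rep = "(nat \<Rightarrow> mat3) \<times> (nat \<Rightarrow> mat3) \<times> (nat \<Rightarrow> mat3)"

definition rA :: "rep \<Rightarrow> nat \<Rightarrow> mat3" where "rA \<rho> = fst \<rho>"
definition rB :: "rep \<Rightarrow> nat \<Rightarrow> mat3" where "rB \<rho> = fst (snd \<rho>)"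
definition rC :: "rep \<Rightarrow> nat \<Rightarrow> mat3" where "rC \<rho> = snd (snd \<rho>)"

definition is_hom :: "nat \<Rightarrow> nat \<Rightarrow> rep \<Rightarrow> bool" where
  "is_hom g n \<rho> \<longleftrightarrow>
     (\<forall>i\<in>{1..g}. rA \<rho> i \<in> SU3 \<and> rB \<rho> i \<in> SU3) \<and> (\<forall>j\<in>{1..n}. rC \<rho> j \<in> SU3) \<and>
     (\<forall>i. i \<notin> {1..g} \<longrightarrow> rA \<rho> i = mat 1 \<and> rB \<rho> i = mat 1) \<and>
     (\<forall>j. j \<notin> {1..n} \<longrightarrow> rC \<rho> j = mat 1) \<and>
     mprod g (\<lambda>i. commu (rA \<rho> i) (rB \<rho> i)) = mprod n (rC \<rho>)"

definition conjugate :: "mat3 \<Rightarrow> mat3 \<Rightarrow> bool" where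
  "conjugate x y \<longleftrightarrow> (\<exists>P\<in>SU3. y = P ** x ** matrix_inv P)"

definition conj_rep :: "mat3 \<Rightarrow> rep \<Rightarrow> rep" where
  "conj_rep P \<rho> = ((\<lambda>i. P ** rA \<rho> i ** matrix_inv P), (\<lambda>i. P ** rB \<rho> i ** matrix_inv P),
                    (\<lambda>i. P ** rC \<rho> i ** matrix_inv P))"

definition Reps :: "nat \<Rightarrow> nat \<Rightarrow> (nat \<Rightarrow> mat3) \<Rightarrow> rep set" where
  "Reps g n t = {\<rho>. is_hom g n \<rho> \<and> (\<forall>m\<in>{1..n}. conjugate (rC \<rho> m) (t m))}"

definition conj_rel :: "nat \<Rightarrow> nat \<Rightarrow> (nat \<Rightarrow> mat3) \<Rightarrow> (rep \<times> rep) set" where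
  "conj_rel g n t = {(\<rho>, \<sigma>). \<rho> \<in> Reps g n t \<and> \<sigma> \<in> Reps g n t \<and> (\<exists>P\<in>SU3. \<sigma> = conj_rep P \<rho>)}"

definition S_g :: "nat \<Rightarrow> nat \<Rightarrow> (nat \<Rightarrow> mat3) \<Rightarrow> rep set set" where
  "S_g g n t = Reps g n t // conj_rel g n t"

definition V_g :: "nat \<Rightarrow> nat \<Rightarrow> nat \<Rightarrow> (nat \<Rightarrow> mat3) \<Rightarrow> rep set" where
  "V_g l g n t = {\<rho> \<in> Reps g n t. rC \<rho> l = t l}"

text \<open>Zero locus in S_g of the section s^l_{j,k}(c_q): classes having a representative
  rho in V^l and A in SU(3) with A rho(c_q) A^{-1} = t_q and A_{jk} = 0.\<close>
definition zero_locus :: "nat \<Rightarrow> nat \<Rightarrow> (nat \<Rightarrow> mat3) \<Rightarrow> nat \<Rightarrow> 3 \<Rightarrow> 3 \<Rightarrow> nat \<Rightarrow> rep set set" where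
  "zero_locus g n t l j k q = {X \<in> S_g g n t. \<exists>\<rho>\<in>X. \<rho> \<in> V_g l g n t \<and>
      (\<exists>A\<in>SU3. A ** rC \<rho> q ** matrix_inv A = t q \<and> A $ j $ k = 0)}"

end

theory Submission
  imports Defs
begin

text \<open>Let rho1, rho2 be representatives of one class in V^l and A1, A2 in SU(3) frames with
  Ai rhoi(c_q) Ai^-1 = t_q. Then rho2 = P rho1 P^-1 where P fixes the regular element t_l, so P
  is diagonal, and A2 P A1^-1 fixes the regular element t_q, so it is diagonal too. Hence the
  zero pattern of the frame is an invariant of the class, and the conjunction of two vanishing
  conditions is witnessed by a single frame A. For unitary A the i-th row is a multiple of e_i
  exactly when the i-th column is, by orthonormality of rows and of columns.\<close>

lemma sum_UNIV_single:
  fixes f :: "'n::finite \<Rightarrow> 'a::comm_monoid_add"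
  assumes "\<And>m. m \<noteq> i \<Longrightarrow> f m = 0"
  shows "(\<Sum>m\<in>UNIV. f m) = f i"
  using assms by (simp add: sum.remove[of UNIV i] sum.neutral)

definition diag_mat :: "'a::zero^'n^'n \<Rightarrow> bool" where
  "diag_mat D \<longleftrightarrow> (\<forall>a b. a \<noteq> b \<longrightarrow> D $ a $ b = 0)"

lemma matrix_mul_diag_right:
  fixes B D :: "'a::semiring_1^'n^'n"
  assumes "diag_mat D"
  shows "(B ** D) $ a $ b = B $ a $ b * D $ b $ b"
  using assms unfolding matrix_matrix_mult_def diag_mat_def
  by (simp add: sum_UNIV_single[where i = b])

lemma matrix_mul_diag_left:
  fixes B D :: "'a::semiring_1^'n^'n"
  assumes "diag_mat D"
  shows "(D ** B) $ a $ b = D $ a $ a * B $ a $ b"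
  using assms unfolding matrix_matrix_mult_def diag_mat_def
  by (simp add: sum_UNIV_single[where i = a])

lemma matrix_mul_diag_both_entry:
  fixes A B C :: "'a::semiring_1^'n^'n"
  assumes "diag_mat B" "diag_mat C"
  shows "(B ** A ** C) $ a $ b = B $ a $ a * A $ a $ b * C $ b $ b"
  by (simp add: matrix_mul_diag_right[OF assms(2)] matrix_mul_diag_left[OF assms(1)])

lemma commute_regular_diag_imp_diag:
  fixes D P :: "'a::idom^'n^'n"
  assumes "diag_mat D" "inj (\<lambda>a. D $ a $ a)" "P ** D = D ** P"
  shows "diag_mat P"
  unfolding diag_mat_def
proof (intro allI impI)
  fix a b :: 'n
  assume "a \<noteq> b"
  have "P $ a $ b * D $ b $ b = D $ a $ a * P $ a $ b"
    using arg_cong[OF assms(3), of "\<lambda>M. M $ a $ b"]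
    by (simp add: matrix_mul_diag_right[OF assms(1)] matrix_mul_diag_left[OF assms(1)])
  then have "P $ a $ b * (D $ b $ b - D $ a $ a) = 0"
    by (simp add: algebra_simps)
  moreover have "D $ b $ b \<noteq> D $ a $ a"
    using assms(2) \<open>a \<noteq> b\<close> by (auto dest: injD)
  ultimately show "P $ a $ b = 0"
    by simp
qed

lemma matrix_inv_invertible:
  fixes A :: "'a::semiring_1^'n^'n"
  assumes "invertible A"
  shows "A ** matrix_inv A = mat 1" "matrix_inv A ** A = mat 1"
proof -
  have "A ** matrix_inv A = mat 1 \<and> matrix_inv A ** A = mat 1"
    using assms unfolding invertible_def matrix_inv_def by (rule someI_ex)
  then show "A ** matrix_inv A = mat 1" "matrix_inv A ** A = mat 1"
    by simp_all
qed

lemma matrix_inv_unique: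
  fixes A B :: "'a::field^'n^'n"
  assumes "A ** B = mat 1"
  shows "matrix_inv A = B"
proof -
  have "invertible A"
    using assms invertible_right_inverse by blast
  then have "matrix_inv A = matrix_inv A ** (A ** B)"
    using assms by simp
  also have "\<dots> = (matrix_inv A ** A) ** B"
    by (simp only: matrix_mul_assoc)
  also have "\<dots> = B"
    by (simp add: matrix_inv_invertible[OF \<open>invertible A\<close>])
  finally show ?thesis .
qed

lemma matrix_inv_mult:
  fixes A B :: "'a::field^'n^'n"
  assumes "invertible A" "invertible B"
  shows "matrix_inv (A ** B) = matrix_inv B ** matrix_inv A"
proof (rule matrix_inv_unique)
  have "A ** B ** (matrix_inv B ** matrix_inv A) = A ** (B ** matrix_inv B) ** matrix_inv A"
    by (simp add: matrix_mul_assoc)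
  then show "A ** B ** (matrix_inv B ** matrix_inv A) = mat 1"
    by (simp add: matrix_inv_invertible assms)
qed

lemma invertible_matrix_inv:
  fixes A :: "'a::semiring_1^'n^'n"
  assumes "invertible A"
  shows "invertible (matrix_inv A)"
  using matrix_inv_invertible[OF assms] unfolding invertible_def by blast

lemma matrix_inv_matrix_inv:
  fixes A :: "'a::field^'n^'n"
  assumes "invertible A"
  shows "matrix_inv (matrix_inv A) = A"
  by (rule matrix_inv_unique) (rule matrix_inv_invertible(2)[OF assms])

lemma diagonalizers_differ_by_diag:
  fixes A\<^sub>1 A\<^sub>2 D x :: "'a::field^'n^'n"
  assumes "invertible A\<^sub>1" "invertible A\<^sub>2"
    and "A\<^sub>1 ** x ** matrix_inv A\<^sub>1 = D" "A\<^sub>2 ** x ** matrix_inv A\<^sub>2 = D"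
    and "diag_mat D" "inj (\<lambda>a. D $ a $ a)"
  shows "diag_mat (A\<^sub>2 ** matrix_inv A\<^sub>1)"
proof (rule commute_regular_diag_imp_diag[OF assms(5,6)])
  note inv = matrix_inv_invertible[OF assms(1)] matrix_inv_invertible[OF assms(2)]
  have "A\<^sub>2 ** matrix_inv A\<^sub>1 ** D = A\<^sub>2 ** (matrix_inv A\<^sub>1 ** A\<^sub>1) ** x ** matrix_inv A\<^sub>1"
    by (simp add: assms(3)[symmetric] matrix_mul_assoc)
  also have "\<dots> = A\<^sub>2 ** x ** (matrix_inv A\<^sub>2 ** A\<^sub>2) ** matrix_inv A\<^sub>1"
    by (simp add: inv)
  also have "\<dots> = D ** (A\<^sub>2 ** matrix_inv A\<^sub>1)"
    by (simp add: assms(4)[symmetric] matrix_mul_assoc)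
  finally show "A\<^sub>2 ** matrix_inv A\<^sub>1 ** D = D ** (A\<^sub>2 ** matrix_inv A\<^sub>1)" .
qed

definition orthonormal_rows :: "complex^'n^'n \<Rightarrow> bool" where
  "orthonormal_rows A \<longleftrightarrow>
     (\<forall>a b. (\<Sum>m\<in>UNIV. A $ a $ m * cnj (A $ b $ m)) = (if a = b then 1 else 0))"

lemma orthonormal_rows_row_sparse_imp_col_sparse:
  assumes "orthonormal_rows A" and row: "\<And>m. m \<noteq> i \<Longrightarrow> A $ i $ m = 0" and "a \<noteq> i"
  shows "A $ a $ i = 0"
proof -
  have "\<And>b. (\<Sum>m\<in>UNIV. A $ b $ m * cnj (A $ i $ m)) = A $ b $ i * cnj (A $ i $ i)"
    using row by (intro sum_UNIV_single) simp
  then have "A $ i $ i * cnj (A $ i $ i) = 1" "A $ a $ i * cnj (A $ i $ i) = 0"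
    using assms(1,3) unfolding orthonormal_rows_def by metis+
  then show ?thesis
    by auto
qed

lemma SU3_orthonormal_rows:
  assumes "A \<in> SU3"
  shows "orthonormal_rows A" "orthonormal_rows (transpose A)"
proof -
  have "A ** cadj A = mat 1"
    using assms by (simp add: SU3_def)
  moreover from this have "cadj A ** A = mat 1"
    using matrix_left_right_inverse by blast
  ultimately have "\<And>a b. (A ** cadj A) $ a $ b = (if a = b then 1 else 0)"
    "\<And>a b. (cadj A ** A) $ b $ a = (if a = b then 1 else 0)"
    by (simp_all add: mat_def)
  then show "orthonormal_rows A" "orthonormal_rows (transpose A)"
    unfolding orthonormal_rows_def matrix_matrix_mult_def cadj_def transpose_def
    by (simp_all add: mult.commute)
qed

lemma SU3_invertible:
  assumes "A \<in> SU3"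
  shows "invertible A"
  using assms invertible_right_inverse unfolding SU3_def by blast

lemma all_3_other_iff:
  assumes "distinct [i, j, k :: 3]"
  shows "(\<forall>m. m \<noteq> i \<longrightarrow> P m) \<longleftrightarrow> P j \<and> P k"
proof -
  have "card {i, j, k} = CARD(3)"
    using assms by simp
  then have "{i, j, k} = UNIV"
    by (metis card_subset_eq finite subset_UNIV)
  then have "m \<noteq> i \<longleftrightarrow> m = j \<or> m = k" for m
    using assms by auto
  then show ?thesis
    by metis
qed

lemma SU3_row_zero_iff_col_zero:
  assumes "A \<in> SU3" "distinct [i, j, k :: 3]"
  shows "(A $ i $ j = 0 \<and> A $ i $ k = 0) \<longleftrightarrow> (A $ j $ i = 0 \<and> A $ k $ i = 0)"
  using orthonormal_rows_row_sparse_imp_col_sparse[OF SU3_orthonormal_rows(1)[OF assms(1)]]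
    orthonormal_rows_row_sparse_imp_col_sparse[OF SU3_orthonormal_rows(2)[OF assms(1)]]
    all_3_other_iff[OF assms(2), of "\<lambda>m. A $ i $ m = 0"]
    all_3_other_iff[OF assms(2), of "\<lambda>m. A $ m $ i = 0"]
  unfolding transpose_def vec_lambda_beta by blast

lemma S_g_class_conjugate:
  assumes "X \<in> S_g g n t" "\<rho>\<^sub>1 \<in> X" "\<rho>\<^sub>2 \<in> X"
  obtains P where "invertible P" "\<And>m. rC \<rho>\<^sub>2 m = P ** rC \<rho>\<^sub>1 m ** matrix_inv P"
proof -
  obtain \<rho> where X: "X = conj_rel g n t `` {\<rho>}"
    using assms(1) unfolding S_g_def by (auto elim: quotientE)
  obtain P\<^sub>1 P\<^sub>2 where P: "P\<^sub>1 \<in> SU3" "\<rho>\<^sub>1 = conj_rep P\<^sub>1 \<rho>" "P\<^sub>2 \<in> SU3" "\<rho>\<^sub>2 = conj_rep P\<^sub>2 \<rho>"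
    using assms(2,3) unfolding X conj_rel_def by auto
  have inv: "invertible P\<^sub>1" "invertible P\<^sub>2"
    using P SU3_invertible by auto
  note cancel = matrix_inv_invertible[OF inv(1)] matrix_inv_invertible[OF inv(2)]
  define P where "P = P\<^sub>2 ** matrix_inv P\<^sub>1"
  have "invertible P"
    unfolding P_def by (intro invertible_mult invertible_matrix_inv inv)
  moreover have "matrix_inv P = P\<^sub>1 ** matrix_inv P\<^sub>2"
    unfolding P_def
    by (simp add: matrix_inv_mult inv invertible_matrix_inv matrix_inv_matrix_inv)
  moreover have "rC \<rho>\<^sub>2 m = P ** rC \<rho>\<^sub>1 m ** (P\<^sub>1 ** matrix_inv P\<^sub>2)" for m
  proof -
    have "P ** rC \<rho>\<^sub>1 m ** (P\<^sub>1 ** matrix_inv P\<^sub>2)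
        = P\<^sub>2 ** (matrix_inv P\<^sub>1 ** P\<^sub>1) ** rC \<rho> m ** (matrix_inv P\<^sub>1 ** P\<^sub>1) ** matrix_inv P\<^sub>2"
      unfolding P_def P(2) by (simp add: conj_rep_def rC_def matrix_mul_assoc)
    then show ?thesis
      unfolding P(4) by (simp add: conj_rep_def rC_def cancel)
  qed
  ultimately show ?thesis
    using that by metis
qed

lemma generic_regular_diag:
  assumes "generic n t" "m \<in> {1..n}"
  shows "diag_mat (t m)" "inj (\<lambda>a. t m $ a $ a)"
proof -
  have "t m \<in> torus" "\<forall>a b. a \<noteq> b \<longrightarrow> t m $ a $ a \<noteq> t m $ b $ b"
    using assms unfolding generic_def by auto
  then show "diag_mat (t m)" "inj (\<lambda>a. t m $ a $ a)"
    unfolding torus_def diag_mat_def inj_def by blast+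
qed

lemma diag_mat_matrix_inv_fixing_regular_diag:
  fixes P D :: "'a::field^'n^'n"
  assumes "invertible P" "P ** D ** matrix_inv P = D" "diag_mat D" "inj (\<lambda>a. D $ a $ a)"
  shows "diag_mat (matrix_inv P)"
proof -
  have one: "invertible (mat 1 :: 'a^'n^'n)"
    unfolding invertible_def by (metis matrix_mul_lid)
  have "matrix_inv (mat 1 :: 'a^'n^'n) = mat 1"
    by (rule matrix_inv_unique) simp
  then have "mat 1 ** D ** matrix_inv (mat 1) = D"
    by simp
  from diagonalizers_differ_by_diag[OF assms(1) one assms(2) this assms(3,4)] show ?thesis
    by simp
qed

lemma frame_entry_zero_class_invariant:
  assumes "generic n t" "l \<in> {1..n}" "q \<in> {1..n}" "X \<in> S_g g n t"
    and "\<rho>\<^sub>1 \<in> X" "\<rho>\<^sub>2 \<in> X" "rC \<rho>\<^sub>1 l = t l" "rC \<rho>\<^sub>2 l = t l"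
    and "A\<^sub>1 \<in> SU3" "A\<^sub>2 \<in> SU3"
    and A\<^sub>1: "A\<^sub>1 ** rC \<rho>\<^sub>1 q ** matrix_inv A\<^sub>1 = t q"
    and A\<^sub>2: "A\<^sub>2 ** rC \<rho>\<^sub>2 q ** matrix_inv A\<^sub>2 = t q"
    and "A\<^sub>1 $ a $ b = 0"
  shows "A\<^sub>2 $ a $ b = 0"
proof -
  obtain P where P: "invertible P" "\<And>m. rC \<rho>\<^sub>2 m = P ** rC \<rho>\<^sub>1 m ** matrix_inv P"
    using S_g_class_conjugate[OF assms(4-6)] by blast
  have inv: "invertible A\<^sub>1" "invertible A\<^sub>2"
    using assms(9,10) SU3_invertible by auto
  note cancel = matrix_inv_invertible[OF inv(1)] matrix_inv_invertible[OF P(1)]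
  have "diag_mat (matrix_inv P)"
    using diag_mat_matrix_inv_fixing_regular_diag[OF P(1) _ generic_regular_diag[OF assms(1,2)]]
      P(2)[of l] assms(7,8) by simp
  moreover have "diag_mat (A\<^sub>2 ** P ** matrix_inv A\<^sub>1)"
  proof (rule diagonalizers_differ_by_diag[OF inv(1) _ A\<^sub>1 _ generic_regular_diag[OF assms(1,3)]])
    show "invertible (A\<^sub>2 ** P)"
      using inv(2) P(1) by (rule invertible_mult)
    show "A\<^sub>2 ** P ** rC \<rho>\<^sub>1 q ** matrix_inv (A\<^sub>2 ** P) = t q"
      using A\<^sub>2 by (simp add: P matrix_inv_mult inv(2) matrix_mul_assoc)
  qed
  moreover have "A\<^sub>2 = (A\<^sub>2 ** P ** matrix_inv A\<^sub>1) ** A\<^sub>1 ** matrix_inv P"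
  proof -
    have "(A\<^sub>2 ** P ** matrix_inv A\<^sub>1) ** A\<^sub>1 ** matrix_inv P
        = A\<^sub>2 ** (P ** (matrix_inv A\<^sub>1 ** A\<^sub>1) ** matrix_inv P)"
      by (simp only: matrix_mul_assoc)
    then show ?thesis
      by (simp add: cancel)
  qed
  ultimately show ?thesis
    using assms(13) by (metis matrix_mul_diag_both_entry mult_zero_left mult_zero_right)
qed

lemma zero_locus_pair_iff:
  assumes "generic n t" "l \<in> {1..n}" "q \<in> {1..n}" "X \<in> S_g g n t"
  shows "(X \<in> zero_locus g n t l a b q \<and> X \<in> zero_locus g n t l a' b' q) \<longleftrightarrow>
    (\<exists>\<rho>\<in>X. \<rho> \<in> V_g l g n t \<and>
      (\<exists>A\<in>SU3. A ** rC \<rho> q ** matrix_inv A = t q \<and> A $ a $ b = 0 \<and> A $ a' $ b' = 0))"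
    (is "?zero_loci \<longleftrightarrow> ?common_frame")
proof
  assume ?zero_loci
  then obtain \<rho>\<^sub>1 A\<^sub>1 \<rho>\<^sub>2 A\<^sub>2
    where 1: "\<rho>\<^sub>1 \<in> X" "\<rho>\<^sub>1 \<in> V_g l g n t" "A\<^sub>1 \<in> SU3"
      "A\<^sub>1 ** rC \<rho>\<^sub>1 q ** matrix_inv A\<^sub>1 = t q" "A\<^sub>1 $ a $ b = 0"
    and 2: "\<rho>\<^sub>2 \<in> X" "\<rho>\<^sub>2 \<in> V_g l g n t" "A\<^sub>2 \<in> SU3"
      "A\<^sub>2 ** rC \<rho>\<^sub>2 q ** matrix_inv A\<^sub>2 = t q" "A\<^sub>2 $ a' $ b' = 0"
    unfolding zero_locus_def by blast
  have "A\<^sub>1 $ a' $ b' = 0"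
    using frame_entry_zero_class_invariant[OF assms 2(1) 1(1) _ _ 2(3) 1(3) 2(4) 1(4) 2(5)]
      1(2) 2(2) unfolding V_g_def by auto
  with 1 show ?common_frame
    by blast
next
  assume ?common_frame
  with assms(4) show ?zero_loci
    unfolding zero_locus_def by blast
qed

theorem lemma2p5:
  fixes g n l q :: nat and t :: "nat \<Rightarrow> mat3" and i j k :: 3 and X :: "rep set"
  assumes "g \<ge> 2" and "n \<ge> 2" and "generic n t"
    and "l \<in> {1..n}" and "q \<in> {1..n}" and "l \<noteq> q"
    and "distinct [i, j, k]"
    and "X \<in> S_g g n t"
  shows "(X \<in> zero_locus g n t l i j q \<and> X \<in> zero_locus g n t l i k q) \<longleftrightarrow>
         (X \<in> zero_locus g n t l j i q \<and> X \<in> zero_locus g n t l k i q)"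
  unfolding zero_locus_pair_iff[OF assms(3-5,8)]
  using SU3_row_zero_iff_col_zero[OF _ assms(7)] by blast

end
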